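(* Let $H$ be a homogeneous relation on a finite set $V$ and let $A\in\mathcal F_H$ (so $|A|\ge 1$). Let $\mathcal F(A)=\{F\in\mathcal F_H : F\supseteq A\}$. Then $(\mathcal F(A),\subseteq)$ is a distributive lattice (with meet $\cap$ and join $\cup$).
   Context: $V$ is a finite set. A reflectless triple is a triple $(x,y,z)\in V^3$ with $x\neq y$ and $x\neq z$, written $(x|yz)$. A homogeneous relation $H$ on $V$ is a set of reflectless triples (we write $H(s|xy)$ when $(s|xy)\in H$) such that for every $s\in V$ the binary relation $H_s=\{(x,y): H(s|xy)\}$ is an equivalence relation on $V\setminus\{s\}$. For $X\subseteq V$ and $s\notin X$, $X$ is homogeneous with respect to $s$ if $H(s|xy)$ for all $x,y\in X$; otherwise $s$ distinguishes $X$. A homogeneous set is a nonempty $M\subseteq V$ such that no element of $V\setminus M$ distinguishes $M$; $\mathcal F_H$ denotes the family of homogeneous sets. *)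

theory Defs
  imports Main
begin

text \<open>A triple (x,y,z), written (x|yz), is encoded as the pair (x,(y,z)).\<close>

definition reflectless_triple :: "'a set \<Rightarrow> ('a \<times> 'a \<times> 'a) \<Rightarrow> bool" where
  "reflectless_triple V t \<longleftrightarrow>
     (case t of (x, y, z) \<Rightarrow> x \<in> V \<and> y \<in> V \<and> z \<in> V \<and> x \<noteq> y \<and> x \<noteq> z)"

definition H_at :: "('a \<times> 'a \<times> 'a) set \<Rightarrow> 'a \<Rightarrow> ('a \<times> 'a) set" where
  "H_at H s = {(x, y). (s, x, y) \<in> H}"

definition homogeneous_relation :: "'a set \<Rightarrow> ('a \<times> 'a \<times> 'a) set \<Rightarrow> bool" where
  "homogeneous_relation V H \<longleftrightarrow>
     (\<forall>t\<in>H. reflectless_triple V t) \<and>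
     (\<forall>s\<in>V. equiv (V - {s}) (H_at H s))"

definition homogeneous_wrt :: "('a \<times> 'a \<times> 'a) set \<Rightarrow> 'a set \<Rightarrow> 'a \<Rightarrow> bool" where
  "homogeneous_wrt H X s \<longleftrightarrow> (\<forall>x\<in>X. \<forall>y\<in>X. (s, x, y) \<in> H)"

definition distinguishes :: "('a \<times> 'a \<times> 'a) set \<Rightarrow> 'a \<Rightarrow> 'a set \<Rightarrow> bool" where
  "distinguishes H s X \<longleftrightarrow> s \<notin> X \<and> \<not> homogeneous_wrt H X s"

definition homogeneous_set :: "'a set \<Rightarrow> ('a \<times> 'a \<times> 'a) set \<Rightarrow> 'a set \<Rightarrow> bool" where
  "homogeneous_set V H M \<longleftrightarrow>
     M \<noteq> {} \<and> M \<subseteq> V \<and> (\<forall>s\<in>V - M. \<not> distinguishes H s M)"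

definition hom_family :: "'a set \<Rightarrow> ('a \<times> 'a \<times> 'a) set \<Rightarrow> 'a set set" where
  "hom_family V H = {M. homogeneous_set V H M}"

definition hom_family_above :: "'a set \<Rightarrow> ('a \<times> 'a \<times> 'a) set \<Rightarrow> 'a set \<Rightarrow> 'a set set" where
  "hom_family_above V H A = {F \<in> hom_family V H. A \<subseteq> F}"

end

theory Submission
  imports Defs
begin

text \<open>If two homogeneous sets F and G share a point a, then every s outside F \<union> G relates
  each element of F \<union> G to a, so by transitivity of H_s it does not distinguish F \<union> G;
  F \<inter> G is trivially homogeneous once it is nonempty. All members of \<F>(A) contain A \<noteq> {},
  so they overlap pairwise, and distributivity is inherited from the lattice of sets.\<close>

lemma homogeneous_relation_trans:
  assumes "homogeneous_relation V H" and "s \<in> V"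
    and "(s, x, y) \<in> H" and "(s, y, z) \<in> H"
  shows "(s, x, z) \<in> H"
proof -
  have "trans (H_at H s)"
    using assms(1,2) by (auto simp: homogeneous_relation_def equiv_def)
  then show ?thesis
    using assms(3,4) by (auto simp: H_at_def dest: transD)
qed

lemma homogeneous_setD:
  assumes "homogeneous_set V H M" and "s \<in> V - M" and "x \<in> M" and "y \<in> M"
  shows "(s, x, y) \<in> H"
  using assms by (auto simp: homogeneous_set_def distinguishes_def homogeneous_wrt_def)

lemma homogeneous_set_Int:
  assumes "homogeneous_set V H F" and "homogeneous_set V H G" and "F \<inter> G \<noteq> {}"
  shows "homogeneous_set V H (F \<inter> G)"
  using assms unfolding homogeneous_set_def distinguishes_def homogeneous_wrt_def
  by blast

lemma homogeneous_set_Un: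
  assumes hr: "homogeneous_relation V H"
    and F: "homogeneous_set V H F" and G: "homogeneous_set V H G" and "F \<inter> G \<noteq> {}"
  shows "homogeneous_set V H (F \<union> G)"
  unfolding homogeneous_set_def
proof (intro conjI ballI)
  show "F \<union> G \<noteq> {}" using \<open>F \<inter> G \<noteq> {}\<close> by blast
  show "F \<union> G \<subseteq> V" using F G by (auto simp: homogeneous_set_def)
  obtain a where aF: "a \<in> F" and aG: "a \<in> G" using \<open>F \<inter> G \<noteq> {}\<close> by blast
  fix s assume s: "s \<in> V - (F \<union> G)"
  have to_a: "(s, x, a) \<in> H" and from_a: "(s, a, x) \<in> H" if "x \<in> F \<union> G" for x
    using that homogeneous_setD[OF F, of s] homogeneous_setD[OF G, of s] s aF aG by auto
  have "homogeneous_wrt H (F \<union> G) s"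
    unfolding homogeneous_wrt_def
    using homogeneous_relation_trans[OF hr] to_a from_a s by blast
  then show "\<not> distinguishes H s (F \<union> G)" by (simp add: distinguishes_def)
qed

lemma hom_family_above_Int_Un:
  assumes "homogeneous_relation V H" and "A \<noteq> {}"
    and "F \<in> hom_family_above V H A" and "G \<in> hom_family_above V H A"
  shows "F \<inter> G \<in> hom_family_above V H A" and "F \<union> G \<in> hom_family_above V H A"
proof -
  have F: "homogeneous_set V H F" "A \<subseteq> F" and G: "homogeneous_set V H G" "A \<subseteq> G"
    using assms(3,4) by (auto simp: hom_family_above_def hom_family_def)
  have "F \<inter> G \<noteq> {}" using F(2) G(2) \<open>A \<noteq> {}\<close> by blast
  then show "F \<inter> G \<in> hom_family_above V H A" and "F \<union> G \<in> hom_family_above V H A"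
    using homogeneous_set_Int[OF F(1) G(1)] homogeneous_set_Un[OF assms(1) F(1) G(1)] F(2) G(2)
    by (auto simp: hom_family_above_def hom_family_def)
qed

theorem mainTheorem3:
  fixes V :: "'a set" and H :: "('a \<times> 'a \<times> 'a) set" and A :: "'a set"
  assumes "finite V"
    and "homogeneous_relation V H"
    and "A \<in> hom_family V H"
  shows "A \<in> hom_family_above V H A
    \<and> (\<forall>F\<in>hom_family_above V H A. \<forall>G\<in>hom_family_above V H A.
          F \<inter> G \<in> hom_family_above V H A \<and> F \<union> G \<in> hom_family_above V H A)
    \<and> (\<forall>F\<in>hom_family_above V H A. \<forall>G\<in>hom_family_above V H A. \<forall>K\<in>hom_family_above V H A.
          F \<inter> (G \<union> K) = (F \<inter> G) \<union> (F \<inter> K))"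
proof -
  have "A \<noteq> {}" using assms(3) by (simp add: hom_family_def homogeneous_set_def)
  then show ?thesis
    using assms(3) hom_family_above_Int_Un[OF assms(2)]
    by (auto simp: hom_family_above_def)
qed

end
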